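(* Let $(G,E,\phi_c)$ be a twisted Exel–Pardo tuple. Then $c$ extends uniquely to a $1$-cocycle $c:G\times\mathcal P(E)\to\mathcal U(\ell)$ (i.e. $c(gh,\alpha)=c(g,h(\alpha))c(h,\alpha)$ for all $g,h\in G$, $\alpha\in\mathcal P(E)$) satisfying \[ c(g,v)=1,\qquad c(g,\alpha\beta)=c(g,\alpha)\,c(\phi(g,\alpha),\beta) \] for all $g\in G$, $v\in E^0$ and all concatenable $\alpha,\beta\in\mathcal P(E)$.
   Context: $\ell$ is a commutative unital ring, $\mathcal U(\ell)$ its unit group. A graph $E=(E^0,E^1,r,s)$; a path of length $n\ge1$ is $e_1\cdots e_n$ with $r(e_i)=s(e_{i+1})$, vertices are paths of length $0$, and $\mathcal P(E)$ is the set of finite paths; $\alpha,\beta$ are concatenable if $r(\alpha)=s(\beta)$. An Exel–Pardo tuple $(G,E,\phi)$: a group $G$ acting on $E$ by graph automorphisms and $\phi:G\times E^1\to G$ with $\phi(gh,e)=\phi(g,h(e))\phi(h,e)$ and $\phi(g,e)(v)=g(v)$ for all $v\in E^0$. A twisted tuple $(G,E,\phi_c)$ adds $c:G\times E^1\to\mathcal U(\ell)$ with $c(gh,e)=c(g,h(e))c(h,e)$. By a result of Exel and Pardo, the action and $\phi$ extend uniquely to an action of $G$ on $\mathcal P(E)$ and a $1$-cocycle $\phi:G\times\mathcal P(E)\to G$ such that $\phi(g,v)=g$ for $v\in E^0$, $|g(\alpha)|=|\alpha|$, $g(\alpha\beta)=g(\alpha)\phi(g,\alpha)(\beta)$ and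 $\phi(g,\alpha\beta)=\phi(\phi(g,\alpha),\beta)$; these extensions are used in the statement. *)

theory Defs
  imports "HOL-Algebra.Group_Action"
begin

text \<open>Graph E = (E0, E1, r, s): vertices are the elements of type 'v, edges the elements
  of type 'e, with range r and source s.\<close>

datatype ('v, 'e) path = Vtx 'v | Edges "'e list"

definition is_path :: "('e \<Rightarrow> 'v) \<Rightarrow> ('e \<Rightarrow> 'v) \<Rightarrow> ('v, 'e) path \<Rightarrow> bool" where
  "is_path r s p = (case p of Vtx v \<Rightarrow> True
     | Edges es \<Rightarrow> es \<noteq> [] \<and> (\<forall>i. Suc i < length es \<longrightarrow> r (es ! i) = s (es ! Suc i)))"

definition paths :: "('e \<Rightarrow> 'v) \<Rightarrow> ('e \<Rightarrow> 'v) \<Rightarrow> ('v, 'e) path set" where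
  "paths r s = {p. is_path r s p}"

fun path_src :: "('e \<Rightarrow> 'v) \<Rightarrow> ('v, 'e) path \<Rightarrow> 'v" where
  "path_src s (Vtx v) = v"
| "path_src s (Edges es) = s (hd es)"

fun path_rng :: "('e \<Rightarrow> 'v) \<Rightarrow> ('v, 'e) path \<Rightarrow> 'v" where
  "path_rng r (Vtx v) = v"
| "path_rng r (Edges es) = r (last es)"

text \<open>Concatenation alpha beta (meaningful when r(alpha) = s(beta)).\<close>
fun path_concat :: "('v, 'e) path \<Rightarrow> ('v, 'e) path \<Rightarrow> ('v, 'e) path" where
  "path_concat (Vtx v) q = q"
| "path_concat (Edges es) (Vtx w) = Edges es"
| "path_concat (Edges es) (Edges fs) = Edges (es @ fs)"

definition EP_tuple ::
  "('g, 'm) monoid_scheme \<Rightarrow> ('e \<Rightarrow> 'v) \<Rightarrow> ('e \<Rightarrow> 'v) \<Rightarrow> ('g \<Rightarrow> 'v \<Rightarrow> 'v)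
    \<Rightarrow> ('g \<Rightarrow> 'e \<Rightarrow> 'e) \<Rightarrow> ('g \<Rightarrow> 'e \<Rightarrow> 'g) \<Rightarrow> bool" where
  "EP_tuple G r s av ae phi \<longleftrightarrow>
     group G \<and> group_action G UNIV av \<and> group_action G UNIV ae \<and>
     (\<forall>g\<in>carrier G. \<forall>e. s (ae g e) = av g (s e) \<and> r (ae g e) = av g (r e)) \<and>
     (\<forall>g\<in>carrier G. \<forall>e. phi g e \<in> carrier G) \<and>
     (\<forall>g\<in>carrier G. \<forall>h\<in>carrier G. \<forall>e.
        phi (g \<otimes>\<^bsub>G\<^esub> h) e = phi g (ae h e) \<otimes>\<^bsub>G\<^esub> phi h e) \<and>
     (\<forall>g\<in>carrier G. \<forall>e v. av (phi g e) v = av g v)"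

text \<open>Twisted Exel--Pardo tuple: additionally c : G x E1 \<rightarrow> U(l) with
  c(gh,e) = c(g,h(e)) c(h,e).  Units of the commutative ring l are the a with a dvd 1.\<close>

definition twisted_EP_tuple ::
  "('g, 'm) monoid_scheme \<Rightarrow> ('e \<Rightarrow> 'v) \<Rightarrow> ('e \<Rightarrow> 'v) \<Rightarrow> ('g \<Rightarrow> 'v \<Rightarrow> 'v)
    \<Rightarrow> ('g \<Rightarrow> 'e \<Rightarrow> 'e) \<Rightarrow> ('g \<Rightarrow> 'e \<Rightarrow> 'g) \<Rightarrow> ('g \<Rightarrow> 'e \<Rightarrow> 'a::comm_ring_1) \<Rightarrow> bool" where
  "twisted_EP_tuple G r s av ae phi c \<longleftrightarrow>
     EP_tuple G r s av ae phi \<and>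
     (\<forall>g\<in>carrier G. \<forall>e. c g e dvd 1) \<and>
     (\<forall>g\<in>carrier G. \<forall>h\<in>carrier G. \<forall>e. c (g \<otimes>\<^bsub>G\<^esub> h) e = c g (ae h e) * c h e)"

text \<open>The (unique, Exel--Pardo) extensions of the action and of phi to finite paths:
  g(v) = g v, phi(g,v) = g, g(e alpha) = g(e) phi(g,e)(alpha),
  phi(g, e alpha) = phi(phi(g,e), alpha).\<close>

fun act_edges :: "('g \<Rightarrow> 'e \<Rightarrow> 'e) \<Rightarrow> ('g \<Rightarrow> 'e \<Rightarrow> 'g) \<Rightarrow> 'g \<Rightarrow> 'e list \<Rightarrow> 'e list" where
  "act_edges ae phi g [] = []"
| "act_edges ae phi g (e # es) = ae g e # act_edges ae phi (phi g e) es"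

fun phi_edges :: "('g \<Rightarrow> 'e \<Rightarrow> 'g) \<Rightarrow> 'g \<Rightarrow> 'e list \<Rightarrow> 'g" where
  "phi_edges phi g [] = g"
| "phi_edges phi g (e # es) = phi_edges phi (phi g e) es"

fun act_path :: "('g \<Rightarrow> 'v \<Rightarrow> 'v) \<Rightarrow> ('g \<Rightarrow> 'e \<Rightarrow> 'e) \<Rightarrow> ('g \<Rightarrow> 'e \<Rightarrow> 'g)
    \<Rightarrow> 'g \<Rightarrow> ('v, 'e) path \<Rightarrow> ('v, 'e) path" where
  "act_path av ae phi g (Vtx v) = Vtx (av g v)"
| "act_path av ae phi g (Edges es) = Edges (act_edges ae phi g es)"

fun phi_path :: "('g \<Rightarrow> 'e \<Rightarrow> 'g) \<Rightarrow> 'g \<Rightarrow> ('v, 'e) path \<Rightarrow> 'g" where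
  "phi_path phi g (Vtx v) = g"
| "phi_path phi g (Edges es) = phi_edges phi g es"

definition is_twisted_cocycle_ext ::
  "('g, 'm) monoid_scheme \<Rightarrow> ('e \<Rightarrow> 'v) \<Rightarrow> ('e \<Rightarrow> 'v) \<Rightarrow> ('g \<Rightarrow> 'v \<Rightarrow> 'v)
    \<Rightarrow> ('g \<Rightarrow> 'e \<Rightarrow> 'e) \<Rightarrow> ('g \<Rightarrow> 'e \<Rightarrow> 'g) \<Rightarrow> ('g \<Rightarrow> 'e \<Rightarrow> 'a::comm_ring_1)
    \<Rightarrow> ('g \<Rightarrow> ('v, 'e) path \<Rightarrow> 'a) \<Rightarrow> bool" where
  "is_twisted_cocycle_ext G r s av ae phi c c' \<longleftrightarrow>
     (\<forall>g\<in>carrier G. \<forall>e. c' g (Edges [e]) = c g e) \<and>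
     (\<forall>g\<in>carrier G. \<forall>\<alpha>\<in>paths r s. c' g \<alpha> dvd 1) \<and>
     (\<forall>g\<in>carrier G. \<forall>h\<in>carrier G. \<forall>\<alpha>\<in>paths r s.
        c' (g \<otimes>\<^bsub>G\<^esub> h) \<alpha> = c' g (act_path av ae phi h \<alpha>) * c' h \<alpha>) \<and>
     (\<forall>g\<in>carrier G. \<forall>v. c' g (Vtx v) = 1) \<and>
     (\<forall>g\<in>carrier G. \<forall>\<alpha>\<in>paths r s. \<forall>\<beta>\<in>paths r s. path_rng r \<alpha> = path_src s \<beta> \<longrightarrow>
        c' g (path_concat \<alpha> \<beta>) = c' g \<alpha> * c' (phi_path phi g \<alpha>) \<beta>)"

end

theory Submission
  imports Defs
begin

text \<open>Splitting off the first edge, the concatenation rule forces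
  c(g, e \<alpha>) = c(g, e) c(phi(g, e), \<alpha>), so an extension is unique, and this recursion
  along the path defines one.  Its cocycle identity follows by induction on the path:
  c(g h, e) = c(g, h(e)) c(h, e) handles the first edge, and since
  phi(g h, e) = phi(g, h(e)) phi(h, e), the rest of the path is the same problem for the
  pair phi(g, h(e)), phi(h, e).\<close>

fun c_edges :: "('g \<Rightarrow> 'e \<Rightarrow> 'g) \<Rightarrow> ('g \<Rightarrow> 'e \<Rightarrow> 'a::comm_ring_1) \<Rightarrow> 'g \<Rightarrow> 'e list \<Rightarrow> 'a" where
  "c_edges phi c g [] = 1"
| "c_edges phi c g (e # es) = c g e * c_edges phi c (phi g e) es"

fun c_path :: "('g \<Rightarrow> 'e \<Rightarrow> 'g) \<Rightarrow> ('g \<Rightarrow> 'e \<Rightarrow> 'a::comm_ring_1) \<Rightarrow> 'g \<Rightarrow> ('v, 'e) path \<Rightarrow> 'a" where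
  "c_path phi c g (Vtx v) = 1"
| "c_path phi c g (Edges es) = c_edges phi c g es"

lemma twisted_EP_tupleD:
  assumes "twisted_EP_tuple G r s av ae phi c"
  shows "g \<in> carrier G \<Longrightarrow> phi g e \<in> carrier G"
    and "g \<in> carrier G \<Longrightarrow> h \<in> carrier G \<Longrightarrow>
           phi (g \<otimes>\<^bsub>G\<^esub> h) e = phi g (ae h e) \<otimes>\<^bsub>G\<^esub> phi h e"
    and "g \<in> carrier G \<Longrightarrow> c g e dvd 1"
    and "g \<in> carrier G \<Longrightarrow> h \<in> carrier G \<Longrightarrow> c (g \<otimes>\<^bsub>G\<^esub> h) e = c g (ae h e) * c h e"
  using assms by (simp_all add: twisted_EP_tuple_def EP_tuple_def)

lemma is_path_Edges_Cons:
  assumes "is_path r s (Edges (e # es))" and "es \<noteq> []"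
  shows "is_path r s (Edges es)" and "r e = s (hd es)"
  using assms by (auto simp: is_path_def hd_conv_nth)

lemma c_edges_append:
  "c_edges phi c g (es @ fs) = c_edges phi c g es * c_edges phi c (phi_edges phi g es) fs"
  by (induction es arbitrary: g) (auto simp: algebra_simps)

lemma c_edges_unit:
  assumes "\<And>g e. g \<in> A \<Longrightarrow> phi g e \<in> A" and "\<And>g e. g \<in> A \<Longrightarrow> c g e dvd 1" and "g \<in> A"
  shows "c_edges phi c g es dvd 1"
  using assms(3)
proof (induction es arbitrary: g)
  case Nil
  then show ?case by simp
next
  case (Cons e es)
  have "c g e dvd 1" and "c_edges phi c (phi g e) es dvd 1"
    using Cons.prems by (simp_all add: assms(1,2) Cons.IH)
  then show ?case using mult_dvd_mono[of _ 1 _ 1] by simp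
qed

lemma c_edges_mult:
  assumes phi_closed: "\<And>g e. g \<in> carrier G \<Longrightarrow> phi g e \<in> carrier G"
    and phi_mult: "\<And>g h e. g \<in> carrier G \<Longrightarrow> h \<in> carrier G \<Longrightarrow>
           phi (g \<otimes>\<^bsub>G\<^esub> h) e = phi g (ae h e) \<otimes>\<^bsub>G\<^esub> phi h e"
    and c_mult: "\<And>g h e. g \<in> carrier G \<Longrightarrow> h \<in> carrier G \<Longrightarrow>
           c (g \<otimes>\<^bsub>G\<^esub> h) e = c g (ae h e) * c h e"
    and "g \<in> carrier G" and "h \<in> carrier G"
  shows "c_edges phi c (g \<otimes>\<^bsub>G\<^esub> h) es = c_edges phi c g (act_edges ae phi h es) * c_edges phi c h es"
  using assms(4,5)
proof (induction es arbitrary: g h)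
  case Nil
  then show ?case by simp
next
  case (Cons e es)
  have "c_edges phi c (g \<otimes>\<^bsub>G\<^esub> h) (e # es) =
      c g (ae h e) * c h e * c_edges phi c (phi g (ae h e) \<otimes>\<^bsub>G\<^esub> phi h e) es"
    using Cons.prems by (simp add: phi_mult c_mult)
  also have "\<dots> = c g (ae h e) * c h e *
      (c_edges phi c (phi g (ae h e)) (act_edges ae phi (phi h e) es) * c_edges phi c (phi h e) es)"
    using Cons.prems by (simp add: Cons.IH phi_closed)
  finally show ?case by (simp add: algebra_simps)
qed

lemma c_path_is_twisted_cocycle_ext:
  assumes tuple: "twisted_EP_tuple G r s av ae phi c"
  shows "is_twisted_cocycle_ext G r s av ae phi c (c_path phi c)"
  unfolding is_twisted_cocycle_ext_def
proof (intro conjI ballI allI impI)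
  fix g \<alpha>
  assume "g \<in> carrier G"
  then show "c_path phi c g \<alpha> dvd 1"
    using c_edges_unit[of "carrier G" phi c] twisted_EP_tupleD[OF tuple]
    by (cases \<alpha>) auto
next
  fix g h \<alpha>
  assume "g \<in> carrier G" and "h \<in> carrier G"
  then show "c_path phi c (g \<otimes>\<^bsub>G\<^esub> h) \<alpha> = c_path phi c g (act_path av ae phi h \<alpha>) * c_path phi c h \<alpha>"
    using c_edges_mult[of G phi ae c] twisted_EP_tupleD[OF tuple]
    by (cases \<alpha>) auto
next
  fix g \<alpha> \<beta>
  show "c_path phi c g (path_concat \<alpha> \<beta>) = c_path phi c g \<alpha> * c_path phi c (phi_path phi g \<alpha>) \<beta>"
    by (cases \<alpha>; cases \<beta>) (auto simp: c_edges_append)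
qed auto

lemma twisted_cocycle_ext_Edges_eq_c_edges:
  assumes ext: "is_twisted_cocycle_ext G r s av ae phi c c'"
    and phi_closed: "\<And>g e. g \<in> carrier G \<Longrightarrow> phi g e \<in> carrier G"
    and "g \<in> carrier G" and "is_path r s (Edges es)"
  shows "c' g (Edges es) = c_edges phi c g es"
  using assms(3,4)
proof (induction es arbitrary: g)
  case Nil
  then show ?case by (simp add: is_path_def)
next
  case (Cons e es)
  have c'_edge: "c' g (Edges [e]) = c g e"
    using ext Cons.prems(1) by (simp add: is_twisted_cocycle_ext_def)
  show ?case
  proof (cases "es = []")
    case True
    with c'_edge show ?thesis by simp
  next
    case False
    note es_path = is_path_Edges_Cons[OF Cons.prems(2) False]
    have concat: "\<forall>\<alpha>\<in>paths r s. \<forall>\<beta>\<in>paths r s. path_rng r \<alpha> = path_src s \<beta> \<longrightarrow>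
        c' g (path_concat \<alpha> \<beta>) = c' g \<alpha> * c' (phi_path phi g \<alpha>) \<beta>"
      using ext Cons.prems(1) unfolding is_twisted_cocycle_ext_def by blast
    have "c' g (path_concat (Edges [e]) (Edges es)) =
        c' g (Edges [e]) * c' (phi_path phi g (Edges [e])) (Edges es)"
      using concat[rule_format, of "Edges [e]" "Edges es"] es_path
      by (simp add: paths_def is_path_def)
    then show ?thesis
      using c'_edge Cons.IH[OF phi_closed[OF Cons.prems(1)] es_path(1)] by simp
  qed
qed

lemma twisted_cocycle_ext_eq_c_path:
  assumes "is_twisted_cocycle_ext G r s av ae phi c c'"
    and "\<And>g e. g \<in> carrier G \<Longrightarrow> phi g e \<in> carrier G"
    and "g \<in> carrier G" and "\<alpha> \<in> paths r s"
  shows "c' g \<alpha> = c_path phi c g \<alpha>"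
proof (cases \<alpha>)
  case (Vtx v)
  then show ?thesis using assms(1,3) by (simp add: is_twisted_cocycle_ext_def)
next
  case (Edges es)
  then show ?thesis
    using assms(4) twisted_cocycle_ext_Edges_eq_c_edges[OF assms(1-3)] by (simp add: paths_def)
qed

theorem lemma2p2:
  fixes G :: "('g, 'm) monoid_scheme"
    and r s :: "'e \<Rightarrow> 'v" and av :: "'g \<Rightarrow> 'v \<Rightarrow> 'v" and ae :: "'g \<Rightarrow> 'e \<Rightarrow> 'e"
    and phi :: "'g \<Rightarrow> 'e \<Rightarrow> 'g" and c :: "'g \<Rightarrow> 'e \<Rightarrow> 'a::comm_ring_1"
  assumes "twisted_EP_tuple G r s av ae phi c"
  shows "\<exists>c'. is_twisted_cocycle_ext G r s av ae phi c c' \<and>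
           (\<forall>c''. is_twisted_cocycle_ext G r s av ae phi c c'' \<longrightarrow>
              (\<forall>g\<in>carrier G. \<forall>\<alpha>\<in>paths r s. c'' g \<alpha> = c' g \<alpha>))"
proof (intro exI conjI allI impI ballI)
  show "is_twisted_cocycle_ext G r s av ae phi c (c_path phi c)"
    using assms by (rule c_path_is_twisted_cocycle_ext)
next
  fix c'' g \<alpha>
  assume c'': "is_twisted_cocycle_ext G r s av ae phi c c''"
    and g: "g \<in> carrier G" and \<alpha>: "\<alpha> \<in> paths r s"
  have phi_closed: "\<And>g e. g \<in> carrier G \<Longrightarrow> phi g e \<in> carrier G"
    using assms by (rule twisted_EP_tupleD(1))
  show "c'' g \<alpha> = c_path phi c g \<alpha>"
    using c'' phi_closed g \<alpha> by (rule twisted_cocycle_ext_eq_c_path)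
qed

end
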